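(* Let $p\leq q$ be positive integers, $n=p+q$, and let $M$ be an $n\times n$ complex matrix. Then $M$ satisfies $M=M^*$ and $M^*I_{p,q}M=I_{p,q}$ if and only if there exist an integer $k$ with $0\leq k\leq q$, vectors $z_1^+,\dots,z_k^+\in\mathbb{C}^p$ that are pairwise orthogonal (some of them possibly zero), and vectors $z_1^-,\dots,z_k^-\in\mathbb{C}^q$ that are pairwise orthogonal (some of them possibly zero), such that for every $j$ \[ \|z_j^+\|^2+\|z_j^-\|^2=1,\qquad \|z_j^+\|^2\neq\|z_j^-\|^2, \] and such that either $M$ or $-M$ equals \[ \sum_{j=1}^k\lambda_j z_jz_j^*-I_{p,q},\qquad\text{where } z_j=\begin{pmatrix}z_j^+\\ z_j^-\end{pmatrix}\in\mathbb{C}^n,\quad \lambda_j=\frac{2}{\|z_j^+\|^2-\|z_j^-\|^2}. \]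
   Context: $I_{p,q}=\mathrm{diag}\{I_p,-I_q\}$, where $I_p$ is the $p\times p$ identity matrix; $M^*$ and $z^*$ denote conjugate transposes; $\|\cdot\|$ and orthogonality refer to the standard Euclidean (Hermitian) inner product $\langle u,v\rangle=u^*v$. Throughout the paper it is assumed that $p\leq q$. *)

theory Defs
  imports "Jordan_Normal_Form.Matrix"
begin

definition adj :: "complex mat \<Rightarrow> complex mat" where
  "adj M = mat (dim_col M) (dim_row M) (\<lambda>(i,j). cnj (M $$ (j,i)))"

definition Ipq :: "nat \<Rightarrow> nat \<Rightarrow> complex mat" where
  "Ipq p q = mat (p+q) (p+q) (\<lambda>(i,j). if i = j then (if i < p then 1 else -1) else 0)"

definition vnorm2 :: "complex vec \<Rightarrow> real" where
  "vnorm2 v = (\<Sum>i<dim_vec v. (cmod (v $ i))\<^sup>2)"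

definition pq_matrix :: "nat \<Rightarrow> nat \<Rightarrow> nat \<Rightarrow> (nat \<Rightarrow> complex vec) \<Rightarrow> (nat \<Rightarrow> complex vec) \<Rightarrow> complex mat" where
  "pq_matrix p q k zp zm =
     mat (p+q) (p+q) (\<lambda>(a,b). \<Sum>j<k.
        complex_of_real (2 / (vnorm2 (zp j) - vnorm2 (zm j)))
          * (zp j @\<^sub>v zm j) $ a * cnj ((zp j @\<^sub>v zm j) $ b)) - Ipq p q"

end

theory Submission
  imports Defs "Jordan_Normal_Form.Spectral_Radius"
begin

text \<open>
  Write J for I_{p,q}. For Hermitian M, the identity M J M = J is equivalent to N J N = 2 N
  for N = M + J. Diagonalising the Hermitian matrix N in an orthonormal eigenbasis and dropping
  the zero eigenvalues gives N = sum_j lambda_j z_j z_j^* with orthonormal z_j and lambda_j /= 0,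
  and then N J N = 2 N says precisely that z_i^* J z_j = 2 delta_ij / lambda_j. Splitting
  z_j = (z_j^+, z_j^-), the relations z_i^* z_j = 0 and z_i^* J z_j = 0 for i /= j give the
  orthogonality of the z_j^+ and of the z_j^-, while the diagonal ones give
  |z_j^+|^2 + |z_j^-|^2 = 1 and lambda_j = 2 / (|z_j^+|^2 - |z_j^-|^2).

  The bound k <= q is a trace count: the decompositions of M + J and of -M + J have k_1 and
  k_2 terms with 2 k_1 = tr ((M + J) J) and 2 k_2 = tr ((-M + J) J), so k_1 + k_2 = tr (J J)
  = p + q <= 2 q, and one of M, -M has a decomposition with at most q terms.
\<close>

(* A form of assoc_mult_mat whose premises are determined by the redex,
   so that it can be used as a simp rule. *)
lemma assoc_mult_mat_dims: "dim_col A = dim_row B \<Longrightarrow> dim_col B = dim_row C \<Longrightarrow> A * B * C = A * (B * C)"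
  by (rule assoc_mult_mat[of A "dim_row A" "dim_col A" B "dim_col B" C "dim_col C"]) auto

lemma mat_eq_mat_iff: "mat n m f = mat n m g \<longleftrightarrow> (\<forall>i<n. \<forall>j<m. f (i, j) = g (i, j))"
proof
  assume "mat n m f = mat n m g"
  then show "\<forall>i<n. \<forall>j<m. f (i, j) = g (i, j)"
    by (metis index_mat(1) prod.simps(2))
qed (auto intro!: eq_matI)

lemma mat_diag_dims [simp]: "dim_row (mat_diag n f) = n" "dim_col (mat_diag n f) = n"
  by (simp_all add: mat_diag_def)

lemma mat_diag_mult_vec:
  assumes "v \<in> carrier_vec n"
  shows "mat_diag n f *\<^sub>v v = vec n (\<lambda>i. f i * v $ i)"
proof (rule eq_vecI)
  fix i assume i: "i < dim_vec (vec n (\<lambda>i. f i * v $ i))"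
  have "(mat_diag n f *\<^sub>v v) $ i = (\<Sum>j<n. (if i = j then f j else 0) * v $ j)"
    using i assms by (simp add: mat_diag_def scalar_prod_def atLeast0LessThan)
  also have "\<dots> = (\<Sum>j<n. if i = j then f j * v $ j else 0)"
    by (rule sum.cong) auto
  finally show "(mat_diag n f *\<^sub>v v) $ i = vec n (\<lambda>i. f i * v $ i) $ i"
    using i by simp
qed (use assms in \<open>simp add: mat_diag_def\<close>)

definition mat_trace :: "'a :: comm_semiring_0 mat \<Rightarrow> 'a" where
  "mat_trace A = (\<Sum>i<dim_row A. A $$ (i, i))"

lemma mat_trace_mult_comm:
  assumes "A \<in> carrier_mat n m" "B \<in> carrier_mat m n"
  shows "mat_trace (A * B) = mat_trace (B * A)"
proof -
  have "mat_trace (A * B) = (\<Sum>i<n. \<Sum>j<m. A $$ (i, j) * B $$ (j, i))"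
    using assms by (simp add: mat_trace_def scalar_prod_def atLeast0LessThan)
  also have "\<dots> = (\<Sum>j<m. \<Sum>i<n. B $$ (j, i) * A $$ (i, j))"
    by (subst sum.swap) (simp add: mult.commute)
  also have "\<dots> = mat_trace (B * A)"
    using assms by (simp add: mat_trace_def scalar_prod_def atLeast0LessThan)
  finally show ?thesis .
qed

lemma mat_trace_add: "A \<in> carrier_mat n n \<Longrightarrow> B \<in> carrier_mat n n \<Longrightarrow> mat_trace (A + B) = mat_trace A + mat_trace B"
  by (simp add: mat_trace_def sum.distrib)

lemma mat_trace_uminus: "A \<in> carrier_mat n n \<Longrightarrow> mat_trace (- A) = - mat_trace (A :: 'a :: comm_ring mat)"
  by (simp add: mat_trace_def sum_negf)

lemma mat_trace_one [simp]: "mat_trace (1\<^sub>m n) = of_nat n"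
  by (simp add: mat_trace_def)

lemma conjugate_append_vec: "conjugate (x @\<^sub>v y) = conjugate x @\<^sub>v conjugate y"
  by (rule eq_vecI) auto

lemma cscalar_prod_append:
  assumes "x \<in> carrier_vec p" "y \<in> carrier_vec q" "x' \<in> carrier_vec p" "y' \<in> carrier_vec q"
  shows "(x @\<^sub>v y) \<bullet>c (x' @\<^sub>v y') = x \<bullet>c x' + y \<bullet>c y'"
  using assms by (simp add: conjugate_append_vec scalar_prod_append[of _ p _ q])

lemma cscalar_prod_self: "v \<bullet>c v = complex_of_real (vnorm2 v)"
proof -
  have "z * cnj z = (complex_of_real (cmod z))\<^sup>2" for z
    by (metis complex_norm_square of_real_power)
  then show ?thesis
    by (simp add: vnorm2_def scalar_prod_def atLeast0LessThan of_real_sum)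
qed

lemma adj_dim [simp]: "dim_row (adj A) = dim_col A" "dim_col (adj A) = dim_row A"
  by (simp_all add: adj_def)

lemma adj_index [simp]: "i < dim_col A \<Longrightarrow> j < dim_row A \<Longrightarrow> adj A $$ (i, j) = cnj (A $$ (j, i))"
  by (simp add: adj_def)

lemma adj_carrier_mat [simp]: "A \<in> carrier_mat n m \<Longrightarrow> adj A \<in> carrier_mat m n"
  by (simp add: adj_def)

lemma adj_adj [simp]: "adj (adj A) = A"
  by (rule eq_matI) simp_all

lemma adj_one [simp]: "adj (1\<^sub>m n) = 1\<^sub>m n"
  by (rule eq_matI) simp_all

lemma adj_zero [simp]: "adj (0\<^sub>m n m) = 0\<^sub>m m n"
  by (rule eq_matI) simp_all

lemma adj_add: "A \<in> carrier_mat n m \<Longrightarrow> B \<in> carrier_mat n m \<Longrightarrow> adj (A + B) = adj A + adj B"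
  by (rule eq_matI) auto

lemma adj_uminus: "adj (- A) = - adj A"
  by (rule eq_matI) auto

lemma adj_minus: "A \<in> carrier_mat n m \<Longrightarrow> B \<in> carrier_mat n m \<Longrightarrow> adj (A - B) = adj A - adj B"
  by (rule eq_matI) auto

lemma adj_mult: "dim_col A = dim_row B \<Longrightarrow> adj (A * B) = adj B * adj A"
  by (rule eq_matI) (auto simp: scalar_prod_def cnj_sum mult.commute intro!: sum.cong)

lemma adj_four_block_mat:
  assumes "A \<in> carrier_mat n1 m1" "B \<in> carrier_mat n1 m2" "C \<in> carrier_mat n2 m1" "D \<in> carrier_mat n2 m2"
  shows "adj (four_block_mat A B C D) = four_block_mat (adj A) (adj C) (adj B) (adj D)"
  by (rule eq_matI) (use assms in auto)

lemma adj_mult_index: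
  assumes "A \<in> carrier_mat n m" "B \<in> carrier_mat n r" "i < m" "j < r"
  shows "(adj A * B) $$ (i, j) = col B j \<bullet>c col A i"
  using assms by (auto simp: scalar_prod_def mult.commute intro!: sum.cong)

section \<open>Orthonormal families and outer sums\<close>

definition mat_of_vecs :: "nat \<Rightarrow> nat \<Rightarrow> (nat \<Rightarrow> complex vec) \<Rightarrow> complex mat" where
  "mat_of_vecs n k u = mat n k (\<lambda>(a, j). u j $ a)"

definition orthonormal_vecs :: "nat \<Rightarrow> nat \<Rightarrow> (nat \<Rightarrow> complex vec) \<Rightarrow> bool" where
  "orthonormal_vecs n k u \<longleftrightarrow>
     (\<forall>j<k. u j \<in> carrier_vec n) \<and> (\<forall>i<k. \<forall>j<k. u i \<bullet>c u j = of_bool (i = j))"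

definition unitary_mat :: "nat \<Rightarrow> complex mat \<Rightarrow> bool" where
  "unitary_mat n U \<longleftrightarrow> U \<in> carrier_mat n n \<and> adj U * U = 1\<^sub>m n"

definition outer_sum :: "nat \<Rightarrow> nat \<Rightarrow> (nat \<Rightarrow> complex) \<Rightarrow> (nat \<Rightarrow> complex vec) \<Rightarrow> complex mat" where
  "outer_sum n k c u = mat n n (\<lambda>(a, b). \<Sum>j<k. c j * u j $ a * cnj (u j $ b))"

lemma mat_of_vecs_dim [simp]: "dim_row (mat_of_vecs n k u) = n" "dim_col (mat_of_vecs n k u) = k"
  by (simp_all add: mat_of_vecs_def)

lemma mat_of_vecs_carrier [simp]: "mat_of_vecs n k u \<in> carrier_mat n k"
  by (simp add: mat_of_vecs_def)

lemma col_mat_of_vecs: "u j \<in> carrier_vec n \<Longrightarrow> j < k \<Longrightarrow> col (mat_of_vecs n k u) j = u j"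
  by (auto simp: mat_of_vecs_def intro!: eq_vecI)

lemma mat_of_vecs_col: "U \<in> carrier_mat n k \<Longrightarrow> mat_of_vecs n k (col U) = U"
  by (auto simp: mat_of_vecs_def intro!: eq_matI)

lemma adj_mat_of_vecs_mult_index:
  assumes "\<forall>j<k. u j \<in> carrier_vec n" "B \<in> carrier_mat n n" "i < k" "j < k"
  shows "(adj (mat_of_vecs n k u) * B * mat_of_vecs n k u) $$ (i, j) = (B *\<^sub>v u j) \<bullet>c u i"
proof -
  let ?Z = "mat_of_vecs n k u"
  have "adj ?Z * B * ?Z = adj ?Z * (B * ?Z)"
    using assms(2) by (simp add: assoc_mult_mat[of _ k n _ n _ k])
  also have "\<dots> $$ (i, j) = col (B * ?Z) j \<bullet>c col ?Z i"
    by (rule adj_mult_index) (use assms in auto)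
  finally show ?thesis
    using assms by (simp add: col_mult2[of _ n n _ k] col_mat_of_vecs)
qed

lemma orthonormal_vecs_iff_adj_mult:
  "orthonormal_vecs n k u \<longleftrightarrow>
     (\<forall>j<k. u j \<in> carrier_vec n) \<and> adj (mat_of_vecs n k u) * mat_of_vecs n k u = 1\<^sub>m k"
proof -
  have "(adj (mat_of_vecs n k u) * mat_of_vecs n k u) $$ (i, j) = u j \<bullet>c u i"
    if "\<forall>j<k. u j \<in> carrier_vec n" "i < k" "j < k" for i j
    using adj_mult_index[of "mat_of_vecs n k u" n k "mat_of_vecs n k u" k i j] that
    by (simp add: col_mat_of_vecs)
  then show ?thesis
    unfolding orthonormal_vecs_def mat_eq_iff by (auto simp: of_bool_def)
qed

lemma orthonormal_vecs_cong:
  "(\<And>j. j < k \<Longrightarrow> u j = u' j) \<Longrightarrow> orthonormal_vecs n k u \<longleftrightarrow> orthonormal_vecs n k u'"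
  by (simp add: orthonormal_vecs_def)

lemma orthonormal_vecs_subfamily:
  assumes "orthonormal_vecs n k u" "distinct js" "set js \<subseteq> {..<k}"
  shows "orthonormal_vecs n (length js) (\<lambda>i. u (js ! i))"
proof -
  have "js ! i < k" if "i < length js" for i
    using assms(3) nth_mem[OF that] by auto
  then show ?thesis
    using assms(1) nth_eq_iff_index_eq[OF assms(2)] unfolding orthonormal_vecs_def by auto
qed

lemma unitary_mat_iff_orthonormal_cols:
  "unitary_mat n U \<longleftrightarrow> U \<in> carrier_mat n n \<and> orthonormal_vecs n n (col U)"
  by (auto simp: unitary_mat_def orthonormal_vecs_iff_adj_mult mat_of_vecs_col)

lemma unitary_mat_mult_adj:
  assumes "unitary_mat n U"
  shows "U * adj U = 1\<^sub>m n"
  using assms mat_mult_left_right_inverse[of "adj U" n U] by (simp add: unitary_mat_def)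

lemma unitary_mat_mult:
  assumes "unitary_mat n U" "unitary_mat n V"
  shows "unitary_mat n (U * V)"
proof -
  have U: "dim_row U = n" "dim_col U = n" "adj U * U = 1\<^sub>m n"
    and V: "dim_row V = n" "dim_col V = n" "adj V * V = 1\<^sub>m n"
    using assms carrier_matD[of U n n] carrier_matD[of V n n] by (simp_all add: unitary_mat_def)
  have "adj (U * V) * (U * V) = adj V * ((adj U * U) * V)"
    using U(1,2) V(1,2) by (simp add: adj_mult assoc_mult_mat_dims)
  also have "\<dots> = 1\<^sub>m n"
    using U(3) V by simp
  finally have "adj (U * V) * (U * V) = 1\<^sub>m n" .
  moreover have "U * V \<in> carrier_mat n n"
    using U(1) V(2) by (intro carrier_matI) simp_all
  ultimately show ?thesis
    by (simp add: unitary_mat_def)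
qed

lemma outer_sum_dims [simp]: "dim_row (outer_sum n k c u) = n" "dim_col (outer_sum n k c u) = n"
  by (simp_all add: outer_sum_def)

lemma outer_sum_carrier [simp]: "outer_sum n k c u \<in> carrier_mat n n"
  by (simp add: outer_sum_def)

lemma outer_sum_eq_mult: "outer_sum n k c u = mat_of_vecs n k u * mat_diag k c * adj (mat_of_vecs n k u)"
proof -
  have "mat_of_vecs n k u * mat_diag k c = mat n k (\<lambda>(a, j). u j $ a * c j)"
    by (rule eq_matI) (simp_all add: mat_diag_mult_right[of _ n k] mat_of_vecs_def)
  then show ?thesis
    by (auto simp: outer_sum_def mat_of_vecs_def scalar_prod_def atLeast0LessThan mult_ac
        intro!: eq_matI sum.cong)
qed

lemma outer_sum_cong:
  "(\<And>j. j < k \<Longrightarrow> c j = c' j) \<Longrightarrow> (\<And>j. j < k \<Longrightarrow> u j = u' j) \<Longrightarrow> outer_sum n k c u = outer_sum n k c' u'"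
  by (simp add: outer_sum_def)

lemma adj_outer_sum_of_real:
  "adj (outer_sum n k (\<lambda>j. complex_of_real (d j)) u) = outer_sum n k (\<lambda>j. complex_of_real (d j)) u"
  by (rule eq_matI) (auto simp: outer_sum_def cnj_sum mult_ac)

lemma sum_filter_nth:
  "(\<Sum>i<length (filter P [0..<k]). f (filter P [0..<k] ! i)) = (\<Sum>j<k. if P j then f j else 0)"
proof -
  have "(\<Sum>i<length (filter P [0..<k]). f (filter P [0..<k] ! i)) = sum_list (map f (filter P [0..<k]))"
    by (subst sum_list_sum_nth) (simp add: atLeast0LessThan)
  also have "\<dots> = sum_list (map (\<lambda>j. if P j then f j else 0) [0..<k])"
    by (subst sum_list_map_filter') simp
  also have "\<dots> = (\<Sum>j<k. if P j then f j else 0)"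
    by (simp add: interv_sum_list_conv_sum_set_nat atLeast0LessThan)
  finally show ?thesis .
qed

lemma outer_sum_drop_zeros:
  fixes c :: "nat \<Rightarrow> complex" and k :: nat
  defines "js \<equiv> filter (\<lambda>j. c j \<noteq> 0) [0..<k]"
  shows "outer_sum n k c u = outer_sum n (length js) (\<lambda>i. c (js ! i)) (\<lambda>i. u (js ! i))"
  unfolding js_def outer_sum_def sum_filter_nth[where f = "\<lambda>j. c j * u j $ _ * cnj (u j $ _)"]
  by (auto intro!: eq_matI sum.cong)

lemma mat_trace_outer_sum_mult:
  assumes u: "\<forall>j<k. u j \<in> carrier_vec n" and B: "B \<in> carrier_mat n n"
  shows "mat_trace (outer_sum n k c u * B) = (\<Sum>j<k. c j * ((B *\<^sub>v u j) \<bullet>c u j))"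
proof -
  define Z where "Z = mat_of_vecs n k u"
  have "mat_trace (outer_sum n k c u * B) = mat_trace ((Z * mat_diag k c) * (adj Z * B))"
    using B by (simp add: outer_sum_eq_mult Z_def assoc_mult_mat_dims)
  also have "\<dots> = mat_trace ((adj Z * B * Z) * mat_diag k c)"
    using B by (subst mat_trace_mult_comm[of _ n k]) (auto simp: Z_def assoc_mult_mat_dims intro!: carrier_matI)
  also have "(adj Z * B * Z) * mat_diag k c = mat k k (\<lambda>(i, j). (adj Z * B * Z) $$ (i, j) * c j)"
    using B by (intro mat_diag_mult_right) (auto simp: Z_def intro!: carrier_matI)
  also have "mat_trace \<dots> = (\<Sum>j<k. (adj Z * B * Z) $$ (j, j) * c j)"
    by (simp add: mat_trace_def)
  also have "\<dots> = (\<Sum>j<k. c j * ((B *\<^sub>v u j) \<bullet>c u j))"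
    by (rule sum.cong[OF refl])
      (metis Z_def adj_mat_of_vecs_mult_index[OF u B] lessThan_iff mult.commute)
  finally show ?thesis .
qed

section \<open>Spectral theorem for Hermitian matrices\<close>

definition vnormalize :: "complex vec \<Rightarrow> complex vec" where
  "vnormalize v = complex_of_real (1 / sqrt (vnorm2 v)) \<cdot>\<^sub>v v"

lemma vnorm2_pos: "v \<in> carrier_vec n \<Longrightarrow> v \<noteq> 0\<^sub>v n \<Longrightarrow> 0 < vnorm2 v"
  using conjugate_square_greater_0_vec[of v n] by (simp add: cscalar_prod_self less_complex_def)

lemma vnormalize_carrier [simp]: "v \<in> carrier_vec n \<Longrightarrow> vnormalize v \<in> carrier_vec n"
  by (simp add: vnormalize_def)

lemma cscalar_prod_vnormalize:
  assumes "v \<in> carrier_vec n" "w \<in> carrier_vec n"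
  shows "vnormalize v \<bullet>c vnormalize w
    = complex_of_real (1 / (sqrt (vnorm2 v) * sqrt (vnorm2 w))) * (v \<bullet>c w)"
  using assms by (simp add: vnormalize_def conjugate_smult_vec flip: of_real_mult)

lemma vnormalize_unit:
  assumes "v \<in> carrier_vec n" "v \<noteq> 0\<^sub>v n"
  shows "vnormalize v \<bullet>c vnormalize v = 1"
proof -
  have "vnormalize v \<bullet>c vnormalize v
      = complex_of_real (1 / (sqrt (vnorm2 v) * sqrt (vnorm2 v))) * complex_of_real (vnorm2 v)"
    by (simp only: cscalar_prod_vnormalize[OF assms(1,1)] cscalar_prod_self[of v])
  also have "\<dots> = 1"
    using vnorm2_pos[OF assms] by (simp flip: of_real_mult)
  finally show ?thesis .
qed

lemma vnormalize_id: "v \<bullet>c v = 1 \<Longrightarrow> vnormalize v = v"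
  by (simp add: vnormalize_def cscalar_prod_self)

lemma unit_eigenvector_exists:
  fixes A :: "complex mat"
  assumes A: "A \<in> carrier_mat n n" and n: "0 < n"
  obtains e v where "v \<in> carrier_vec n" "v \<bullet>c v = 1" "A *\<^sub>v v = e \<cdot>\<^sub>v v"
proof -
  obtain e v where v: "v \<in> carrier_vec n" "v \<noteq> 0\<^sub>v n" "A *\<^sub>v v = e \<cdot>\<^sub>v v"
    using spectrum_non_empty[OF A n] A unfolding spectrum_def eigenvalue_def eigenvector_def by auto
  have "A *\<^sub>v vnormalize v = e \<cdot>\<^sub>v vnormalize v"
    using A v by (simp add: vnormalize_def mult_mat_vec smult_smult_assoc mult.commute)
  then show ?thesis
    using that[of "vnormalize v"] v vnormalize_unit by simp
qed

lemma unitary_mat_with_first_col: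
  assumes v: "v \<in> carrier_vec n" "v \<bullet>c v = 1"
  obtains W where "unitary_mat n W" "col W 0 = v"
proof -
  have v0: "v \<noteq> 0\<^sub>v n"
    using v by auto
  then have n: "0 < n"
    using v(1) by (cases n) auto
  interpret cof_vec_space n "TYPE(complex)" .
  define ws where "ws = gram_schmidt n (basis_completion v)"
  note completion = basis_completion[OF v(1) v0]
  have ws: "corthogonal ws" "set ws \<subseteq> carrier_vec n" "length ws = n"
    using gram_schmidt_result[OF completion(2,4,5) ws_def] completion(6) by auto
  have "hd ws = v"
    using completion(6,7) n gram_schmidt_hd[OF v(1)] unfolding ws_def by (cases "basis_completion v") auto
  then have ws0: "ws ! 0 = v"
    using ws(3) n by (cases ws) auto
  have wsj: "ws ! j \<in> carrier_vec n" "ws ! j \<noteq> 0\<^sub>v n" if "j < n" for j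
    using ws that corthogonalD[OF ws(1), of j j] by auto
  define w where "w j = vnormalize (ws ! j)" for j
  have "w i \<bullet>c w j = of_bool (i = j)" if "i < n" "j < n" for i j
  proof (cases "i = j")
    case True
    then show ?thesis
      using vnormalize_unit[OF wsj[OF that(1)]] by (simp add: w_def)
  next
    case False
    then show ?thesis
      using corthogonalD[OF ws(1), of i j] that ws(3)
      by (simp add: w_def cscalar_prod_vnormalize[OF wsj(1)[OF that(1)] wsj(1)[OF that(2)]])
  qed
  then have "orthonormal_vecs n n w"
    using wsj by (simp add: orthonormal_vecs_def w_def)
  then have "unitary_mat n (mat_of_vecs n n w)"
    by (simp add: unitary_mat_def orthonormal_vecs_iff_adj_mult)
  moreover have "col (mat_of_vecs n n w) 0 = v"
    using n ws v by (simp add: col_mat_of_vecs w_def ws0 vnormalize_id)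
  ultimately show ?thesis
    using that by blast
qed

lemma unitary_mat_four_block_one:
  assumes "unitary_mat m V"
  shows "unitary_mat (Suc m) (four_block_mat (1\<^sub>m 1) (0\<^sub>m 1 m) (0\<^sub>m m 1) V)"
proof -
  have V: "V \<in> carrier_mat m m" "adj V * V = 1\<^sub>m m"
    using assms by (simp_all add: unitary_mat_def)
  then show ?thesis
    using four_block_carrier_mat[of "1\<^sub>m 1" 1 1 V m m]
    unfolding unitary_mat_def
    by (simp add: adj_four_block_mat[of _ 1 1 _ m _ m] mult_four_block_mat[of _ 1 1 _ m _ m _ _ 1 _ m])
qed

lemma unitary_mat_conj_adj:
  assumes "unitary_mat n W" "A \<in> carrier_mat n n"
  shows "W * (adj W * A * W) * adj W = A"
proof -
  have dims: "dim_row W = n" "dim_col W = n" "dim_row A = n" "dim_col A = n"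
    using assms carrier_matD[of W n n] carrier_matD[of A n n] by (simp_all add: unitary_mat_def)
  have "W * (adj W * A * W) * adj W = (W * adj W) * A * (W * adj W)"
    using dims by (simp add: assoc_mult_mat_dims)
  then show ?thesis
    using dims unitary_mat_mult_adj[OF assms(1)] by simp
qed

lemma unitary_conj_eigen_first_col:
  assumes A: "A \<in> carrier_mat n n" and W: "unitary_mat n W"
    and eigen: "A *\<^sub>v col W 0 = e \<cdot>\<^sub>v col W 0" and i: "i < n"
  shows "(adj W * A * W) $$ (i, 0) = of_bool (i = 0) * e"
proof -
  have Wc: "W \<in> carrier_mat n n" and WW: "adj W * W = 1\<^sub>m n"
    using W by (simp_all add: unitary_mat_def)
  have "(adj W * A * W) $$ (i, 0) = (adj W * (A * W)) $$ (i, 0)"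
    using A Wc carrier_matD[OF A] carrier_matD[OF Wc] by (simp add: assoc_mult_mat_dims)
  also have "\<dots> = col (A * W) 0 \<bullet>c col W i"
    by (rule adj_mult_index) (use A Wc i in auto)
  also have "col (A * W) 0 = A *\<^sub>v col W 0"
    using A Wc i by (intro col_mult2) auto
  also have "(A *\<^sub>v col W 0) \<bullet>c col W i = e * (col W 0 \<bullet>c col W i)"
    using Wc i by (simp add: eigen)
  also have "col W 0 \<bullet>c col W i = (adj W * W) $$ (i, 0)"
    using adj_mult_index[of W n n W n i 0] Wc i by simp
  finally show ?thesis
    using i by (simp add: WW)
qed

lemma hermitian_unitary_deflation:
  assumes A: "A \<in> carrier_mat (Suc m) (Suc m)" "adj A = A"
    and W: "unitary_mat (Suc m) W" and eigen: "A *\<^sub>v col W 0 = e \<cdot>\<^sub>v col W 0"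
  obtains r B where "B \<in> carrier_mat m m" "adj B = B"
    "adj W * A * W = four_block_mat (mat_diag 1 (\<lambda>_. complex_of_real r)) (0\<^sub>m 1 m) (0\<^sub>m m 1) B"
proof -
  have Wc: "W \<in> carrier_mat (Suc m) (Suc m)"
    using W by (simp add: unitary_mat_def)
  have dims: "dim_row W = Suc m" "dim_col W = Suc m" "dim_row A = Suc m" "dim_col A = Suc m"
    using carrier_matD[OF A(1)] carrier_matD[OF Wc] by simp_all
  define C where "C = adj W * A * W"
  have C: "C \<in> carrier_mat (Suc m) (Suc m)"
    using dims by (intro carrier_matI) (simp_all add: C_def)
  have herm: "adj C = C"
    using dims A(2) by (simp add: C_def adj_mult assoc_mult_mat_dims)
  have col0: "C $$ (i, 0) = of_bool (i = 0) * e" if "i < Suc m" for i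
    unfolding C_def using A(1) W eigen that by (rule unitary_conj_eigen_first_col)
  have herm_index: "cnj (C $$ (j, i)) = C $$ (i, j)" if "i < Suc m" "j < Suc m" for i j
  proof -
    have "adj C $$ (i, j) = cnj (C $$ (j, i))"
      by (rule adj_index) (use C that in auto)
    then show ?thesis
      by (metis herm)
  qed
  have "e = cnj e"
    using col0[of 0] herm_index[of 0 0] by simp
  then have e_real: "e = complex_of_real (Re e)"
    by (simp add: complex_eq_iff)
  have row0: "C $$ (0, j) = of_bool (j = 0) * e" if "j < Suc m" for j
  proof -
    have "C $$ (0, j) = cnj (C $$ (j, 0))"
      using herm_index[of 0 j] that by simp
    then show ?thesis
      using col0[OF that] e_real by (cases "j = 0") auto
  qed
  define B where "B = mat m m (\<lambda>(i, j). C $$ (Suc i, Suc j))"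
  have B: "B \<in> carrier_mat m m"
    by (simp add: B_def)
  have hermB: "adj B = B"
    by (rule eq_matI) (auto simp: B_def herm_index)
  let ?F = "four_block_mat (mat_diag 1 (\<lambda>_. complex_of_real (Re e))) (0\<^sub>m 1 m) (0\<^sub>m m 1) B"
  have "C = ?F"
  proof (rule eq_matI)
    fix i j
    assume "i < dim_row ?F" "j < dim_col ?F"
    then have ij: "i < Suc m" "j < Suc m"
      using B by auto
    show "C $$ (i, j) = ?F $$ (i, j)"
      using col0[OF ij(1)] row0[OF ij(2)] ij e_real B by (cases i; cases j) (simp_all add: B_def mat_diag_def)
  qed (use B C in simp_all)
  then show ?thesis
    unfolding C_def by (rule that[OF B hermB])
qed

lemma four_block_mat_diag_conj:
  assumes V: "V \<in> carrier_mat m m"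
  defines "E \<equiv> four_block_mat (1\<^sub>m 1) (0\<^sub>m 1 m) (0\<^sub>m m 1) V"
  shows "four_block_mat (mat_diag 1 (\<lambda>_. f 0)) (0\<^sub>m 1 m) (0\<^sub>m m 1) (V * mat_diag m (\<lambda>i. f (Suc i)) * adj V)
    = E * mat_diag (Suc m) f * adj E"
proof -
  have "mat_diag (Suc m) f
      = four_block_mat (mat_diag 1 (\<lambda>_. f 0)) (0\<^sub>m 1 m) (0\<^sub>m m 1) (mat_diag m (\<lambda>i. f (Suc i)))"
    by (rule eq_matI) (auto simp: mat_diag_def)
  then show ?thesis
    using V unfolding E_def
    by (simp add: adj_four_block_mat[of _ 1 1 _ m _ m] mult_four_block_mat[of _ 1 1 _ m _ m _ _ 1 _ m]
        mult_carrier_mat[of _ m m _ m])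
qed

lemma hermitian_unitary_diagonalization:
  assumes "A \<in> carrier_mat n n" "adj A = A"
  shows "\<exists>U d. unitary_mat n U \<and> A = U * mat_diag n (\<lambda>i. complex_of_real (d i)) * adj U"
  using assms
proof (induction n arbitrary: A)
  case 0
  show ?case
    by (intro exI[of _ "1\<^sub>m 0"] exI[of _ "\<lambda>_. 0"]) (use 0 in \<open>auto simp: unitary_mat_def intro!: eq_matI\<close>)
next
  case (Suc m)
  obtain e v where v: "v \<in> carrier_vec (Suc m)" "v \<bullet>c v = 1" "A *\<^sub>v v = e \<cdot>\<^sub>v v"
    using unit_eigenvector_exists[OF Suc.prems(1) zero_less_Suc] by blast
  obtain W where W: "unitary_mat (Suc m) W" "col W 0 = v"
    using unitary_mat_with_first_col[OF v(1,2)] .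
  obtain r B where B: "B \<in> carrier_mat m m" "adj B = B"
    and C: "adj W * A * W = four_block_mat (mat_diag 1 (\<lambda>_. complex_of_real r)) (0\<^sub>m 1 m) (0\<^sub>m m 1) B"
    using hermitian_unitary_deflation[OF Suc.prems W(1)] v(3) W(2) by metis
  obtain V d where V: "unitary_mat m V" "B = V * mat_diag m (\<lambda>i. complex_of_real (d i)) * adj V"
    using Suc.IH[OF B] by blast
  define E where "E = four_block_mat (1\<^sub>m 1) (0\<^sub>m 1 m) (0\<^sub>m m 1) V"
  define d' where "d' i = (if i = 0 then r else d (i - 1))" for i
  define D where "D = mat_diag (Suc m) (\<lambda>i. complex_of_real (d' i))"
  have E: "unitary_mat (Suc m) E"
    unfolding E_def using V(1) by (rule unitary_mat_four_block_one)
  have dims: "dim_row W = Suc m" "dim_col W = Suc m" "dim_row E = Suc m" "dim_col E = Suc m"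
    using W(1) E carrier_matD[of W "Suc m" "Suc m"] carrier_matD[of E "Suc m" "Suc m"]
    by (simp_all add: unitary_mat_def)
  have "adj W * A * W = E * D * adj E"
    using four_block_mat_diag_conj[of V m "\<lambda>i. complex_of_real (d' i)"] V(1)
    unfolding C V(2) E_def D_def by (simp add: unitary_mat_def d'_def)
  then have "A = W * (E * D * adj E) * adj W"
    using unitary_mat_conj_adj[OF W(1) Suc.prems(1)] by simp
  also have "\<dots> = (W * E) * D * adj (W * E)"
    using dims by (simp add: D_def adj_mult assoc_mult_mat_dims)
  finally show ?case
    using unitary_mat_mult[OF W(1) E] unfolding D_def by blast
qed

lemma hermitian_spectral_nonzero:
  assumes "A \<in> carrier_mat n n" "adj A = A"
  obtains k u d where "orthonormal_vecs n k u" "\<forall>j<k. d j \<noteq> 0"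
    "A = outer_sum n k (\<lambda>j. complex_of_real (d j)) u"
proof -
  obtain U d where U: "unitary_mat n U" and A: "A = U * mat_diag n (\<lambda>i. complex_of_real (d i)) * adj U"
    using hermitian_unitary_diagonalization[OF assms] by blast
  define js where "js = filter (\<lambda>j. complex_of_real (d j) \<noteq> 0) [0..<n]"
  have "A = outer_sum n n (\<lambda>i. complex_of_real (d i)) (col U)"
    using U unfolding A outer_sum_eq_mult by (simp add: mat_of_vecs_col unitary_mat_def)
  also have "\<dots> = outer_sum n (length js) (\<lambda>i. complex_of_real (d (js ! i))) (\<lambda>i. col U (js ! i))"
    unfolding js_def by (rule outer_sum_drop_zeros)
  finally have eq: "A = outer_sum n (length js) (\<lambda>i. complex_of_real (d (js ! i))) (\<lambda>i. col U (js ! i))" .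
  have "orthonormal_vecs n (length js) (\<lambda>i. col U (js ! i))"
    using U by (intro orthonormal_vecs_subfamily) (auto simp: unitary_mat_iff_orthonormal_cols js_def)
  moreover have "\<forall>i<length js. d (js ! i) \<noteq> 0"
    using nth_mem[of _ js] by (auto simp: js_def)
  ultimately show ?thesis
    using eq by (rule that)
qed

section \<open>Sandwiching by outer sums\<close>

lemma isometry_conj_eq_iff:
  assumes Z: "Z \<in> carrier_mat n k" "adj Z * Z = 1\<^sub>m k"
    and XY: "X \<in> carrier_mat k k" "Y \<in> carrier_mat k k"
  shows "Z * X * adj Z = Z * Y * adj Z \<longleftrightarrow> X = Y"
proof
  have cancel: "adj Z * (Z * T * adj Z) * Z = T" if T: "T \<in> carrier_mat k k" for T
  proof -
    have "adj Z * (Z * T * adj Z) * Z = (adj Z * Z) * T * (adj Z * Z)"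
      using Z(1) T by (simp add: assoc_mult_mat_dims)
    also have "\<dots> = T"
      using Z(2) T by (simp add: left_mult_one_mat[OF T] right_mult_one_mat[OF T])
    finally show ?thesis .
  qed
  assume "Z * X * adj Z = Z * Y * adj Z"
  then show "X = Y"
    using cancel[OF XY(1)] cancel[OF XY(2)] by metis
qed simp

lemma outer_sum_sandwich_eq:
  "outer_sum n k c u * B * outer_sum n k c u
    = mat_of_vecs n k u * (mat_diag k c * (adj (mat_of_vecs n k u) * B * mat_of_vecs n k u) * mat_diag k c)
      * adj (mat_of_vecs n k u)"
  if "B \<in> carrier_mat n n"
  using that by (simp add: outer_sum_eq_mult assoc_mult_mat_dims)

lemma mat_diag_sandwich_eq_smult_iff:
  fixes c :: "nat \<Rightarrow> 'a :: field"
  assumes G: "G \<in> carrier_mat k k" and c: "\<forall>j<k. c j \<noteq> 0"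
  shows "mat_diag k c * G * mat_diag k c = s \<cdot>\<^sub>m mat_diag k c
    \<longleftrightarrow> (\<forall>i<k. \<forall>j<k. G $$ (i, j) = of_bool (i = j) * s / c i)"
proof -
  have lhs: "mat_diag k c * G * mat_diag k c = mat k k (\<lambda>(i, j). c i * G $$ (i, j) * c j)"
  proof -
    have "mat_diag k c * G * mat_diag k c = mat k k (\<lambda>(i, j). c i * G $$ (i, j)) * mat_diag k c"
      using G by (simp add: mat_diag_mult_left)
    also have "\<dots> = mat k k (\<lambda>(i, j). c i * G $$ (i, j) * c j)"
      by (subst mat_diag_mult_right[of _ k k]) (auto intro!: eq_matI)
    finally show ?thesis .
  qed
  have rhs: "s \<cdot>\<^sub>m mat_diag k c = mat k k (\<lambda>(i, j). s * of_bool (i = j) * c j)"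
    by (auto simp: mat_diag_def intro!: eq_matI)
  have entry: "c i * G $$ (i, j) * c j = s * of_bool (i = j) * c j
      \<longleftrightarrow> G $$ (i, j) = of_bool (i = j) * s / c i" if "i < k" "j < k" for i j
    using c that by (cases "i = j") (auto simp: field_simps)
  show ?thesis
    unfolding lhs rhs mat_eq_mat_iff using entry by auto
qed

lemma outer_sum_sandwich_eq_smult_iff:
  assumes u: "orthonormal_vecs n k u" and c: "\<forall>j<k. c j \<noteq> 0" and B: "B \<in> carrier_mat n n"
  shows "outer_sum n k c u * B * outer_sum n k c u = s \<cdot>\<^sub>m outer_sum n k c u
    \<longleftrightarrow> (\<forall>i<k. \<forall>j<k. (B *\<^sub>v u j) \<bullet>c u i = of_bool (i = j) * s / c i)"
proof -
  define Z where "Z = mat_of_vecs n k u"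
  define D where "D = mat_diag k c"
  define G where "G = adj Z * B * Z"
  have Z: "Z \<in> carrier_mat n k" "adj Z * Z = 1\<^sub>m k"
    using u by (simp_all add: Z_def orthonormal_vecs_iff_adj_mult)
  have D: "D \<in> carrier_mat k k"
    by (simp add: D_def)
  have G: "G \<in> carrier_mat k k"
    unfolding G_def by (rule carrier_matI) (simp_all add: Z_def)
  have G_entry: "G $$ (i, j) = (B *\<^sub>v u j) \<bullet>c u i" if "i < k" "j < k" for i j
    unfolding G_def Z_def using u B that by (intro adj_mat_of_vecs_mult_index) (auto simp: orthonormal_vecs_def)
  have NBN: "outer_sum n k c u * B * outer_sum n k c u = Z * (D * G * D) * adj Z"
    unfolding G_def Z_def D_def using B by (rule outer_sum_sandwich_eq)
  have "Z * (s \<cdot>\<^sub>m D) * adj Z = s \<cdot>\<^sub>m (Z * D * adj Z)"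
    using mult_smult_distrib[OF Z(1) D] mult_smult_assoc_mat[of "Z * D" n k "adj Z" n s] Z(1) D
    by (simp only: mult_carrier_mat adj_carrier_mat)
  then have sN: "s \<cdot>\<^sub>m outer_sum n k c u = Z * (s \<cdot>\<^sub>m D) * adj Z"
    by (simp add: outer_sum_eq_mult Z_def D_def)
  have "outer_sum n k c u * B * outer_sum n k c u = s \<cdot>\<^sub>m outer_sum n k c u \<longleftrightarrow> D * G * D = s \<cdot>\<^sub>m D"
    unfolding NBN sN using G by (intro isometry_conj_eq_iff[OF Z]) (auto simp: D_def intro!: carrier_matI)
  also have "\<dots> \<longleftrightarrow> (\<forall>i<k. \<forall>j<k. G $$ (i, j) = of_bool (i = j) * s / c i)"
    unfolding D_def by (rule mat_diag_sandwich_eq_smult_iff[OF G c])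
  also have "\<dots> \<longleftrightarrow> (\<forall>i<k. \<forall>j<k. (B *\<^sub>v u j) \<bullet>c u i = of_bool (i = j) * s / c i)"
    by (simp add: G_entry)
  finally show ?thesis .
qed

lemma involution_sandwich_iff_shift:
  fixes M J :: "'a :: comm_ring_1 mat"
  assumes M: "M \<in> carrier_mat n n" and J: "J \<in> carrier_mat n n" "J * J = 1\<^sub>m n"
  shows "M * J * M = J \<longleftrightarrow> (M + J) * J * (M + J) = 2 \<cdot>\<^sub>m (M + J)"
proof -
  have MJ: "M * J \<in> carrier_mat n n"
    using M J by simp
  have "(M + J) * J = M * J + 1\<^sub>m n"
    using M J by (simp add: add_mult_distrib_mat[of _ n n])
  also have "\<dots> * (M + J) = M * J * M + M + (M + J)"
    using M J MJ
    by (simp add: add_mult_distrib_mat[of _ n n] mult_add_distrib_mat[of _ n n]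
        left_mult_one_mat[OF M] right_mult_one_mat[OF M] left_mult_one_mat[OF J(1)])
  finally have expand: "(M + J) * J * (M + J) = M * J * M + M + (M + J)" .
  show ?thesis
    unfolding expand using M J MJ by (auto simp: mat_eq_iff)
qed

section \<open>The signature matrix and its isometries\<close>

lemma Ipq_dims [simp]: "dim_row (Ipq p q) = p + q" "dim_col (Ipq p q) = p + q"
  by (simp_all add: Ipq_def)

lemma Ipq_carrier_mat [simp]: "Ipq p q \<in> carrier_mat (p + q) (p + q)"
  by (simp add: Ipq_def)

lemma adj_Ipq [simp]: "adj (Ipq p q) = Ipq p q"
  by (rule eq_matI) (auto simp: Ipq_def)

lemma Ipq_eq_mat_diag: "Ipq p q = mat_diag (p + q) (\<lambda>i. if i < p then 1 else - 1)"
  by (rule eq_matI) (auto simp: Ipq_def mat_diag_def)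

lemma Ipq_mult_Ipq [simp]: "Ipq p q * Ipq p q = 1\<^sub>m (p + q)"
  unfolding Ipq_eq_mat_diag mat_diag_diag by (rule eq_matI) (auto simp: mat_diag_def)

lemma Ipq_mult_append:
  assumes "x \<in> carrier_vec p" "y \<in> carrier_vec q"
  shows "Ipq p q *\<^sub>v (x @\<^sub>v y) = x @\<^sub>v (- y)"
  using assms by (auto simp: Ipq_eq_mat_diag mat_diag_mult_vec intro!: eq_vecI)

lemma Ipq_cscalar_prod_append:
  assumes "x \<in> carrier_vec p" "y \<in> carrier_vec q" "x' \<in> carrier_vec p" "y' \<in> carrier_vec q"
  shows "(Ipq p q *\<^sub>v (x @\<^sub>v y)) \<bullet>c (x' @\<^sub>v y') = x \<bullet>c x' - y \<bullet>c y'"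
  using assms by (simp add: Ipq_mult_append cscalar_prod_append[of _ p _ q])

definition pq_admissible :: "nat \<Rightarrow> nat \<Rightarrow> nat \<Rightarrow> (nat \<Rightarrow> complex vec) \<Rightarrow> (nat \<Rightarrow> complex vec) \<Rightarrow> bool" where
  "pq_admissible p q k zp zm \<longleftrightarrow>
     (\<forall>j<k. zp j \<in> carrier_vec p \<and> zm j \<in> carrier_vec q)
     \<and> (\<forall>i<k. \<forall>j<k. i \<noteq> j \<longrightarrow> zp i \<bullet>c zp j = 0 \<and> zm i \<bullet>c zm j = 0)
     \<and> (\<forall>j<k. vnorm2 (zp j) + vnorm2 (zm j) = 1 \<and> vnorm2 (zp j) \<noteq> vnorm2 (zm j))"

(* The paper's lambda_j. When the two norms agree it is 2 / 0 = 0, so the condition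
   |z_j^+|^2 \<noteq> |z_j^-|^2 reads pq_weight (zp j) (zm j) \<noteq> 0. *)
definition pq_weight :: "complex vec \<Rightarrow> complex vec \<Rightarrow> complex" where
  "pq_weight x y = complex_of_real (2 / (vnorm2 x - vnorm2 y))"

lemma pq_matrix_eq_outer_sum:
  "pq_matrix p q k zp zm = outer_sum (p + q) k (\<lambda>j. pq_weight (zp j) (zm j)) (\<lambda>j. zp j @\<^sub>v zm j) - Ipq p q"
  by (simp add: pq_matrix_def outer_sum_def pq_weight_def)

lemma two_div_pq_weight: "2 / pq_weight x y = complex_of_real (vnorm2 x - vnorm2 y)"
  by (simp add: pq_weight_def)

lemma pq_weight_eq_0_iff: "pq_weight x y = 0 \<longleftrightarrow> vnorm2 x = vnorm2 y"
  by (simp add: pq_weight_def)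

lemma pq_admissible_iff:
  assumes carrier: "\<forall>j<k. zp j \<in> carrier_vec p \<and> zm j \<in> carrier_vec q"
  shows "pq_admissible p q k zp zm \<longleftrightarrow>
    orthonormal_vecs (p + q) k (\<lambda>j. zp j @\<^sub>v zm j) \<and> (\<forall>j<k. pq_weight (zp j) (zm j) \<noteq> 0) \<and>
    (\<forall>i<k. \<forall>j<k. (Ipq p q *\<^sub>v (zp j @\<^sub>v zm j)) \<bullet>c (zp i @\<^sub>v zm i)
       = of_bool (i = j) * 2 / pq_weight (zp i) (zm i))"
    (is "_ \<longleftrightarrow> ?orth \<and> ?nonzero \<and> ?gram")
proof -
  have inner: "(zp i @\<^sub>v zm i) \<bullet>c (zp j @\<^sub>v zm j) = zp i \<bullet>c zp j + zm i \<bullet>c zm j"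
    and J_inner: "(Ipq p q *\<^sub>v (zp j @\<^sub>v zm j)) \<bullet>c (zp i @\<^sub>v zm i) = zp j \<bullet>c zp i - zm j \<bullet>c zm i"
    if "i < k" "j < k" for i j
    using carrier that by (simp_all add: cscalar_prod_append[of _ p _ q] Ipq_cscalar_prod_append)
  show ?thesis
  proof
    assume adm: "pq_admissible p q k zp zm"
    have "?orth"
      using adm carrier by (auto simp: orthonormal_vecs_def pq_admissible_def inner cscalar_prod_self
          simp flip: of_real_add)
    moreover have "?nonzero"
      using adm by (simp add: pq_admissible_def pq_weight_eq_0_iff)
    moreover have "?gram"
      using adm by (auto simp: pq_admissible_def J_inner two_div_pq_weight cscalar_prod_self)
    ultimately show "?orth \<and> ?nonzero \<and> ?gram"
      by blast
  next
    assume frame: "?orth \<and> ?nonzero \<and> ?gram"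
    have "zp i \<bullet>c zp j = 0 \<and> zm i \<bullet>c zm j = 0" if "i < k" "j < k" "i \<noteq> j" for i j
    proof -
      have sum: "zp i \<bullet>c zp j + zm i \<bullet>c zm j = 0" and diff: "zp i \<bullet>c zp j - zm i \<bullet>c zm j = 0"
        using frame that by (auto simp: orthonormal_vecs_def simp flip: inner J_inner)
      have "zp i \<bullet>c zp j = ((zp i \<bullet>c zp j + zm i \<bullet>c zm j) + (zp i \<bullet>c zp j - zm i \<bullet>c zm j)) / 2"
        and "zm i \<bullet>c zm j = ((zp i \<bullet>c zp j + zm i \<bullet>c zm j) - (zp i \<bullet>c zp j - zm i \<bullet>c zm j)) / 2"
        by (simp_all add: field_simps)
      then show ?thesis
        unfolding sum diff by simp
    qed
    moreover have "vnorm2 (zp j) + vnorm2 (zm j) = 1" if "j < k" for j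
    proof -
      have "(zp j @\<^sub>v zm j) \<bullet>c (zp j @\<^sub>v zm j) = 1"
        using frame that by (simp add: orthonormal_vecs_def)
      then have "zp j \<bullet>c zp j + zm j \<bullet>c zm j = 1"
        by (simp only: inner[OF that that])
      then have "complex_of_real (vnorm2 (zp j) + vnorm2 (zm j)) = 1"
        by (simp add: cscalar_prod_self)
      then show ?thesis
        by (metis of_real_1 of_real_eq_iff)
    qed
    ultimately show "pq_admissible p q k zp zm"
      using frame carrier by (auto simp: pq_admissible_def pq_weight_eq_0_iff)
  qed
qed

lemma pq_matrix_hermitian_isometry:
  assumes adm: "pq_admissible p q k zp zm"
  defines "M \<equiv> pq_matrix p q k zp zm"
  shows "adj M = M" "M * Ipq p q * M = Ipq p q"
proof -
  let ?J = "Ipq p q"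
  define N where "N = outer_sum (p + q) k (\<lambda>j. pq_weight (zp j) (zm j)) (\<lambda>j. zp j @\<^sub>v zm j)"
  have "\<forall>j<k. zp j \<in> carrier_vec p \<and> zm j \<in> carrier_vec q"
    using adm by (simp add: pq_admissible_def)
  then have frame: "orthonormal_vecs (p + q) k (\<lambda>j. zp j @\<^sub>v zm j)" "\<forall>j<k. pq_weight (zp j) (zm j) \<noteq> 0"
    "\<forall>i<k. \<forall>j<k. (?J *\<^sub>v (zp j @\<^sub>v zm j)) \<bullet>c (zp i @\<^sub>v zm i) = of_bool (i = j) * 2 / pq_weight (zp i) (zm i)"
    using adm pq_admissible_iff by blast+
  have NJN: "N * ?J * N = 2 \<cdot>\<^sub>m N"
    unfolding N_def using outer_sum_sandwich_eq_smult_iff[OF frame(1,2) Ipq_carrier_mat] frame(3) by blast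
  have herm: "adj N = N"
    unfolding N_def pq_weight_def by (rule adj_outer_sum_of_real)
  have M: "M = N - ?J" and MJ: "M + ?J = N"
    by (auto simp: M_def N_def pq_matrix_eq_outer_sum intro!: eq_matI)
  show "adj M = M"
    using herm adj_minus[of N "p + q" "p + q" ?J] by (simp add: M N_def)
  have "M \<in> carrier_mat (p + q) (p + q)"
    unfolding M by (rule minus_carrier_mat[OF Ipq_carrier_mat])
  then show "M * ?J * M = ?J"
    using involution_sandwich_iff_shift[of M "p + q" ?J] NJN unfolding MJ by simp
qed

lemma pq_admissible_split:
  assumes u: "orthonormal_vecs (p + q) k u" and d: "\<forall>j<k. d j \<noteq> 0"
    and gram: "\<forall>i<k. \<forall>j<k. (Ipq p q *\<^sub>v u j) \<bullet>c u i = of_bool (i = j) * 2 / complex_of_real (d i)"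
  defines "zp \<equiv> \<lambda>j. vec_first (u j) p" and "zm \<equiv> \<lambda>j. vec_last (u j) q"
  shows "pq_admissible p q k zp zm"
    and "outer_sum (p + q) k (\<lambda>j. complex_of_real (d j)) u
      = outer_sum (p + q) k (\<lambda>j. pq_weight (zp j) (zm j)) (\<lambda>j. zp j @\<^sub>v zm j)"
proof -
  have carrier: "\<forall>j<k. zp j \<in> carrier_vec p \<and> zm j \<in> carrier_vec q"
    by (simp add: zp_def zm_def vec_first_def vec_last_def)
  have split: "zp j @\<^sub>v zm j = u j" if "j < k" for j
    using u that unfolding zp_def zm_def orthonormal_vecs_def by (metis vec_first_last_append)
  have weight: "pq_weight (zp j) (zm j) = complex_of_real (d j)" if j: "j < k" for j
  proof -
    have "complex_of_real (vnorm2 (zp j) - vnorm2 (zm j)) = (Ipq p q *\<^sub>v (zp j @\<^sub>v zm j)) \<bullet>c (zp j @\<^sub>v zm j)"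
      using carrier j by (simp add: Ipq_cscalar_prod_append cscalar_prod_self)
    also have "\<dots> = complex_of_real (2 / d j)"
      using gram j by (simp add: split)
    finally have "vnorm2 (zp j) - vnorm2 (zm j) = 2 / d j"
      using of_real_eq_iff by blast
    then show ?thesis
      using d j by (simp add: pq_weight_def)
  qed
  show "outer_sum (p + q) k (\<lambda>j. complex_of_real (d j)) u
      = outer_sum (p + q) k (\<lambda>j. pq_weight (zp j) (zm j)) (\<lambda>j. zp j @\<^sub>v zm j)"
    by (rule outer_sum_cong) (simp_all add: weight split)
  have "orthonormal_vecs (p + q) k (\<lambda>j. zp j @\<^sub>v zm j)"
    using u by (subst orthonormal_vecs_cong[of k _ u]) (simp_all add: split)
  then show "pq_admissible p q k zp zm"
    unfolding pq_admissible_iff[OF carrier] using d gram by (simp add: weight split)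
qed

lemma Ipq_isometry_pq_decomposition:
  assumes M: "M \<in> carrier_mat (p + q) (p + q)" "adj M = M" "M * Ipq p q * M = Ipq p q"
  obtains k zp zm where "pq_admissible p q k zp zm" "M = pq_matrix p q k zp zm"
    "of_nat (2 * k) = mat_trace (M * Ipq p q) + of_nat (p + q)"
proof -
  let ?J = "Ipq p q"
  define N where "N = M + ?J"
  have N: "N \<in> carrier_mat (p + q) (p + q)"
    using M by (simp add: N_def)
  have "adj N = N"
    using M by (simp add: N_def adj_add[of _ "p + q" "p + q"])
  then obtain k u d where u: "orthonormal_vecs (p + q) k u" and d: "\<forall>j<k. d j \<noteq> 0"
    and N_eq: "N = outer_sum (p + q) k (\<lambda>j. complex_of_real (d j)) u"
    using hermitian_spectral_nonzero[OF N] by metis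
  have "N * ?J * N = 2 \<cdot>\<^sub>m N"
    using involution_sandwich_iff_shift[of M "p + q" ?J] M by (simp add: N_def)
  then have gram: "\<forall>i<k. \<forall>j<k. (?J *\<^sub>v u j) \<bullet>c u i = of_bool (i = j) * 2 / complex_of_real (d i)"
    using outer_sum_sandwich_eq_smult_iff[OF u _ Ipq_carrier_mat] d unfolding N_eq by simp
  define zp where "zp j = vec_first (u j) p" for j
  define zm where "zm j = vec_last (u j) q" for j
  note split = pq_admissible_split[OF u d gram, folded zp_def zm_def]
  have N_pq: "N = outer_sum (p + q) k (\<lambda>j. pq_weight (zp j) (zm j)) (\<lambda>j. zp j @\<^sub>v zm j)"
    unfolding N_eq by (rule split(2))
  have "M = pq_matrix p q k zp zm"
    using M(1) by (auto simp: pq_matrix_eq_outer_sum N_pq[symmetric] N_def intro!: eq_matI)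
  moreover have "of_nat (2 * k) = mat_trace (M * ?J) + of_nat (p + q)"
  proof -
    have "mat_trace (N * ?J) = (\<Sum>j<k. complex_of_real (d j) * (2 / complex_of_real (d j)))"
      using u gram unfolding N_eq by (simp add: mat_trace_outer_sum_mult orthonormal_vecs_def)
    also have "\<dots> = of_nat (2 * k)"
      using d by simp
    moreover have "N * ?J = M * ?J + 1\<^sub>m (p + q)"
      using M(1) by (simp add: N_def add_mult_distrib_mat[of M "p + q" "p + q" ?J ?J "p + q"])
    ultimately show ?thesis
      using mat_trace_add[OF mult_carrier_mat[OF M(1) Ipq_carrier_mat] one_carrier_mat] by simp
  qed
  ultimately show ?thesis
    using split(1) by (intro that)
qed

lemma Ipq_isometry_short_decomposition:
  assumes "p \<le> q" and M: "M \<in> carrier_mat (p + q) (p + q)" "adj M = M" "M * Ipq p q * M = Ipq p q"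
  shows "\<exists>k zp zm. k \<le> q \<and> pq_admissible p q k zp zm
    \<and> (M = pq_matrix p q k zp zm \<or> - M = pq_matrix p q k zp zm)"
proof -
  let ?J = "Ipq p q"
  have dims: "dim_row M = p + q" "dim_col M = p + q"
    using M(1) by auto
  obtain k1 zp1 zm1 where 1: "pq_admissible p q k1 zp1 zm1" "M = pq_matrix p q k1 zp1 zm1"
    and tr1: "of_nat (2 * k1) = mat_trace (M * ?J) + of_nat (p + q)"
    using Ipq_isometry_pq_decomposition[OF M] by metis
  have "- M * ?J * - M = ?J" "adj (- M) = - M"
    using M dims by (simp_all add: adj_uminus)
  then obtain k2 zp2 zm2 where 2: "pq_admissible p q k2 zp2 zm2" "- M = pq_matrix p q k2 zp2 zm2"
    and tr2: "of_nat (2 * k2) = mat_trace (- M * ?J) + of_nat (p + q)"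
    using Ipq_isometry_pq_decomposition[of "- M"] M(1) by (metis uminus_carrier_mat)
  have "mat_trace (- M * ?J) = - mat_trace (M * ?J)"
    using mat_trace_uminus[OF mult_carrier_mat[OF M(1) Ipq_carrier_mat]] dims by simp
  then have "of_nat (2 * k1 + 2 * k2) = (of_nat (2 * (p + q)) :: complex)"
    using tr1 tr2 by simp
  then have "2 * k1 + 2 * k2 = 2 * (p + q)"
    by (simp only: of_nat_eq_iff)
  then have "k1 + k2 = p + q"
    by simp
  then have "k1 \<le> q \<or> k2 \<le> q"
    using assms(1) by linarith
  then show ?thesis
    using 1 2 by metis
qed

theorem lemma3p4:
  fixes p q :: nat and M :: "complex mat"
  assumes "0 < p" and "p \<le> q" and "M \<in> carrier_mat (p+q) (p+q)"
  shows "(M = adj M \<and> adj M * Ipq p q * M = Ipq p q) \<longleftrightarrow>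
    (\<exists>k zp zm. k \<le> q
      \<and> (\<forall>j<k. zp j \<in> carrier_vec p \<and> zm j \<in> carrier_vec q)
      \<and> (\<forall>i<k. \<forall>j<k. i \<noteq> j \<longrightarrow> zp i \<bullet>c zp j = 0 \<and> zm i \<bullet>c zm j = 0)
      \<and> (\<forall>j<k. vnorm2 (zp j) + vnorm2 (zm j) = 1 \<and> vnorm2 (zp j) \<noteq> vnorm2 (zm j))
      \<and> (M = pq_matrix p q k zp zm \<or> - M = pq_matrix p q k zp zm))"
proof -
  let ?J = "Ipq p q"
  have "(M = adj M \<and> adj M * ?J * M = ?J) \<longleftrightarrow> adj M = M \<and> M * ?J * M = ?J"
    by auto
  also have "\<dots> \<longleftrightarrow> (\<exists>k zp zm. k \<le> q \<and> pq_admissible p q k zp zm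
      \<and> (M = pq_matrix p q k zp zm \<or> - M = pq_matrix p q k zp zm))"
  proof
    assume "adj M = M \<and> M * ?J * M = ?J"
    then show "\<exists>k zp zm. k \<le> q \<and> pq_admissible p q k zp zm
      \<and> (M = pq_matrix p q k zp zm \<or> - M = pq_matrix p q k zp zm)"
      using Ipq_isometry_short_decomposition[OF assms(2,3)] by blast
  next
    assume "\<exists>k zp zm. k \<le> q \<and> pq_admissible p q k zp zm
      \<and> (M = pq_matrix p q k zp zm \<or> - M = pq_matrix p q k zp zm)"
    then obtain k zp zm where adm: "pq_admissible p q k zp zm"
      and "M = pq_matrix p q k zp zm \<or> M = - pq_matrix p q k zp zm"
      by (metis uminus_uminus_mat)
    then show "adj M = M \<and> M * ?J * M = ?J"
      using pq_matrix_hermitian_isometry[OF adm] assms(3) by (auto simp: adj_uminus)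
  qed
  finally show ?thesis
    unfolding pq_admissible_def by blast
qed

end
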